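(* Let $\mathcal{H}$ be a set of connected subgraphs of a graph $G$. Then for every $\ell\in\mathbb{N}_0$, either there are more than $\ell$ pairwise vertex-disjoint graphs in $\mathcal{H}$, or there is a set $Q\subseteq V(G)$ with $|Q|\le(\mathrm{tw}(G)+1)\,\ell\log_2(\ell+1)$ such that $G-Q$ contains no graph of $\mathcal{H}$ (i.e. every member of $\mathcal{H}$ meets $Q$).
   Context: Graphs are finite, simple and undirected; $\mathrm{tw}$ denotes treewidth; $\log$ is base 2. *)

theory Defs
  imports Complex_Main
begin

definition graph :: "'a set \<Rightarrow> 'a set set \<Rightarrow> bool" where
  "graph V E \<longleftrightarrow> finite V \<and> (\<forall>e\<in>E. \<exists>u v. e = {u, v} \<and> u \<noteq> v \<and> u \<in> V \<and> v \<in> V)"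

definition subgraph :: "'a set \<Rightarrow> 'a set set \<Rightarrow> 'a set \<Rightarrow> 'a set set \<Rightarrow> bool" where
  "subgraph V' E' V E \<longleftrightarrow> graph V' E' \<and> V' \<subseteq> V \<and> E' \<subseteq> E"

definition connected_graph :: "'a set \<Rightarrow> 'a set set \<Rightarrow> bool" where
  "connected_graph V E \<longleftrightarrow> V \<noteq> {} \<and>
     (\<forall>u\<in>V. \<forall>v\<in>V. (u, v) \<in> rtrancl {(x, y). {x, y} \<in> E})"

definition tree :: "'a set \<Rightarrow> 'a set set \<Rightarrow> bool" where
  "tree V E \<longleftrightarrow> graph V E \<and> connected_graph V E \<and> card E = card V - 1"

definition tree_decomposition ::
  "'a set \<Rightarrow> 'a set set \<Rightarrow> nat set \<Rightarrow> nat set set \<Rightarrow> (nat \<Rightarrow> 'a set) \<Rightarrow> bool" where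
  "tree_decomposition V E VT ET B \<longleftrightarrow>
     tree VT ET \<and>
     (\<forall>t\<in>VT. B t \<subseteq> V) \<and>
     (\<forall>v\<in>V. \<exists>t\<in>VT. v \<in> B t) \<and>
     (\<forall>e\<in>E. \<exists>t\<in>VT. e \<subseteq> B t) \<and>
     (\<forall>v\<in>V. connected_graph {t\<in>VT. v \<in> B t} {e\<in>ET. e \<subseteq> {t\<in>VT. v \<in> B t}})"

definition decomposition_width :: "nat set \<Rightarrow> (nat \<Rightarrow> 'a set) \<Rightarrow> int" where
  "decomposition_width VT B = int (Max ((\<lambda>t. card (B t)) ` VT)) - 1"

definition treewidth :: "'a set \<Rightarrow> 'a set set \<Rightarrow> int" where
  "treewidth V E = Min {w. \<exists>VT ET B. tree_decomposition V E VT ET B \<and> w = decomposition_width VT B}"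

end

theory Submission
  imports Defs
begin

text \<open>Fix a tree decomposition of optimal width. For each member \<open>H\<close> of \<open>\<H>\<close>, the nodes whose bags
  meet \<open>H\<close> form a subtree of the decomposition tree, and subtrees of members with a common vertex
  intersect. Families of subtrees of a tree satisfy the Erd\H{o}s--P\'osa property with no loss:
  removing a leaf inductively yields either more than \<open>l\<close> disjoint subtrees or \<open>l\<close> nodes meeting all
  of them. The bags of these \<open>l\<close> nodes cover at most \<open>(tw + 1) l\<close> vertices and meet every member of
  \<open>\<H>\<close>; since \<open>log\<^sub>2 (l + 1) \<ge> 1\<close> for \<open>l \<ge> 1\<close>, this is within the claimed bound.\<close>

lemma graph_finite_edges: "graph V E \<Longrightarrow> finite E"
  unfolding graph_def by (rule finite_subset[of E "Pow V"]) auto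

lemma graph_edgeD:
  assumes "graph V E" "{u, v} \<in> E"
  shows "u \<noteq> v" "u \<in> V" "v \<in> V"
proof -
  obtain a b where "{u, v} = {a, b}" "a \<noteq> b" "a \<in> V" "b \<in> V"
    using assms unfolding graph_def by blast
  then show "u \<noteq> v" "u \<in> V" "v \<in> V" by (auto simp: doubleton_eq_iff)
qed

lemma graph_edge_subset: "graph V E \<Longrightarrow> e \<in> E \<Longrightarrow> e \<subseteq> V"
  unfolding graph_def by fastforce

lemma tree_finite_nonempty:
  assumes "tree VT ET"
  shows "finite VT" "VT \<noteq> {}"
  using assms unfolding tree_def graph_def connected_graph_def by simp_all

lemma graph_degree_sum:
  assumes "graph V E"
  shows "(\<Sum>v\<in>V. card {e\<in>E. v \<in> e}) = 2 * card E"
proof -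
  have fE: "finite E" using graph_finite_edges[OF assms] .
  have fV: "finite V" using assms unfolding graph_def by auto
  have "(\<Sum>v\<in>V. card {e\<in>E. v \<in> e}) = (\<Sum>v\<in>V. \<Sum>e\<in>E. if v \<in> e then 1 else 0)"
    by (simp add: sum.inter_filter[symmetric] fE)
  also have "\<dots> = (\<Sum>e\<in>E. \<Sum>v\<in>V. if v \<in> e then 1 else 0)" by (rule sum.swap)
  also have "\<dots> = (\<Sum>e\<in>E. 2)"
  proof (rule sum.cong)
    fix e assume "e \<in> E"
    then obtain a b where ab: "e = {a, b}" "a \<noteq> b" "a \<in> V" "b \<in> V"
      using assms unfolding graph_def by blast
    then have "{v\<in>V. v \<in> e} = {a, b}" by auto
    then show "(\<Sum>v\<in>V. if v \<in> e then 1 else 0) = (2::nat)"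
      using ab fV by (simp add: sum.inter_filter[symmetric])
  qed simp
  finally show ?thesis by simp
qed

lemma graph_has_vertex_of_degree_le_1:
  assumes "graph V E" "card E < card V"
  obtains u where "u \<in> V" "card {e\<in>E. u \<in> e} \<le> 1"
proof (rule ccontr)
  assume "\<not> thesis"
  then have "\<forall>u\<in>V. 2 \<le> card {e\<in>E. u \<in> e}" using that by force
  then have "(\<Sum>v\<in>V. 2) \<le> (\<Sum>v\<in>V. card {e\<in>E. v \<in> e})" by (intro sum_mono) auto
  then show False using graph_degree_sum[OF assms(1)] assms(2) by simp
qed

lemma connected_graph_neighbour:
  assumes "connected_graph V E" "u \<in> V" "V \<noteq> {u}"
  obtains z where "{u, z} \<in> E"
proof -
  obtain y where "y \<in> V" "y \<noteq> u" using assms unfolding connected_graph_def by blast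
  then have "(u, y) \<in> {(x, y). {x, y} \<in> E}\<^sup>*"
    using assms(1,2) unfolding connected_graph_def by blast
  then show thesis using \<open>y \<noteq> u\<close> that by (cases rule: converse_rtranclE) auto
qed

text \<open>A path between vertices other than \<open>u\<close> never needs to visit \<open>u\<close> if its only neighbour is \<open>w\<close>:
  a visit to \<open>u\<close> enters from \<open>w\<close> and immediately returns to \<open>w\<close>.\<close>
lemma rtrancl_avoid_pendant:
  assumes "(x, y) \<in> R\<^sup>*" "x \<noteq> u" "y \<noteq> u" "u \<noteq> w"
    and out: "\<And>z. (u, z) \<in> R \<Longrightarrow> z = w" and into: "\<And>z. (z, u) \<in> R \<Longrightarrow> z = w"
  shows "(x, y) \<in> (R \<inter> {(a, b). a \<noteq> u \<and> b \<noteq> u})\<^sup>*"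
proof -
  let ?R = "R \<inter> {(a, b). a \<noteq> u \<and> b \<noteq> u}"
  have "(y \<noteq> u \<longrightarrow> (x, y) \<in> ?R\<^sup>*) \<and> (y = u \<longrightarrow> (x, w) \<in> ?R\<^sup>*)"
    using assms(1)
  proof (induction rule: rtrancl_induct)
    case base
    show ?case using assms(2) by auto
  next
    case (step y z)
    consider "z = u" | "y = u" | "y \<noteq> u" "z \<noteq> u" by blast
    then show ?case
    proof cases
      case 1
      then show ?thesis using step into[of y] assms(4) by auto
    next
      case 2
      then show ?thesis using step out[of z] assms(4) by auto
    next
      case 3
      then show ?thesis using step by (auto intro: rtrancl_into_rtrancl)
    qed
  qed
  then show ?thesis using assms(3) by auto
qed

lemma connected_graph_delete_pendant:
  assumes "connected_graph V E" "V \<noteq> {u}" "u \<noteq> w" "\<forall>e\<in>E. u \<in> e \<longrightarrow> e = {u, w}"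
  shows "connected_graph (V - {u}) {e\<in>E. u \<notin> e}"
  unfolding connected_graph_def
proof (intro conjI ballI)
  show "V - {u} \<noteq> {}" using assms(1,2) unfolding connected_graph_def by blast
  fix a b assume a: "a \<in> V - {u}" and b: "b \<in> V - {u}"
  let ?R = "{(x, y). {x, y} \<in> E}"
  have "(a, b) \<in> ?R\<^sup>*" using assms(1) a b unfolding connected_graph_def by blast
  then have "(a, b) \<in> (?R \<inter> {(a, b). a \<noteq> u \<and> b \<noteq> u})\<^sup>*"
  proof (rule rtrancl_avoid_pendant[where w = w])
    show "a \<noteq> u" "b \<noteq> u" "u \<noteq> w" using a b assms(3) by auto
    have "z = w" if "{u, z} \<in> E" for z
      using assms(3,4) that by (auto simp: doubleton_eq_iff)
    then show "\<And>z. (u, z) \<in> ?R \<Longrightarrow> z = w" "\<And>z. (z, u) \<in> ?R \<Longrightarrow> z = w"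
      by (simp_all add: insert_commute)
  qed
  moreover have "?R \<inter> {(a, b). a \<noteq> u \<and> b \<noteq> u} = {(x, y). {x, y} \<in> {e\<in>E. u \<notin> e}}" by auto
  ultimately show "(a, b) \<in> {(x, y). {x, y} \<in> {e\<in>E. u \<notin> e}}\<^sup>*" by simp
qed

lemma tree_delete_leaf:
  assumes "tree VT ET" "2 \<le> card VT"
  obtains u w where "u \<in> VT" "u \<noteq> w" "\<forall>e\<in>ET. u \<in> e \<longrightarrow> e = {u, w}"
    "tree (VT - {u}) {e\<in>ET. u \<notin> e}"
proof -
  have g: "graph VT ET" and c: "connected_graph VT ET" and cE: "card ET = card VT - 1"
    using assms(1) unfolding tree_def by auto
  have fV: "finite VT" and fE: "finite ET"
    using g graph_finite_edges[OF g] unfolding graph_def by auto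
  have "card ET < card VT" using cE assms(2) by simp
  then obtain u where u: "u \<in> VT" "card {e\<in>ET. u \<in> e} \<le> 1"
    by (rule graph_has_vertex_of_degree_le_1[OF g])
  have "VT \<noteq> {u}" using assms(2) by auto
  then obtain w where uw: "{u, w} \<in> ET" using connected_graph_neighbour[OF c u(1)] by blast
  have "u \<noteq> w" using graph_edgeD[OF g uw] by simp
  have pendant: "\<forall>e\<in>ET. u \<in> e \<longrightarrow> e = {u, w}"
  proof (intro ballI impI)
    fix e assume "e \<in> ET" "u \<in> e"
    moreover have "finite {e\<in>ET. u \<in> e}" using fE by simp
    ultimately show "e = {u, w}"
      using u(2) uw card_le_Suc0_iff_eq[of "{e\<in>ET. u \<in> e}"] by auto
  qed
  let ?E' = "{e\<in>ET. u \<notin> e}"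
  have "graph (VT - {u}) ?E'"
    unfolding graph_def
  proof (intro conjI ballI)
    fix e assume "e \<in> ?E'"
    then obtain a b where "e = {a, b}" "a \<noteq> b" "a \<in> VT" "b \<in> VT" "u \<notin> e"
      using g unfolding graph_def by blast
    then show "\<exists>a b. e = {a, b} \<and> a \<noteq> b \<and> a \<in> VT - {u} \<and> b \<in> VT - {u}" by blast
  qed (use fV in simp)
  moreover have "connected_graph (VT - {u}) ?E'"
    using connected_graph_delete_pendant[OF c \<open>VT \<noteq> {u}\<close> \<open>u \<noteq> w\<close> pendant] .
  moreover have "card ?E' = card (VT - {u}) - 1"
  proof -
    have "ET = insert {u, w} ?E'" using pendant uw by blast
    moreover have "{u, w} \<notin> ?E'" by simp
    ultimately have "card ET = Suc (card ?E')" using fE by (metis card_insert_disjoint finite_insert)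
    then show ?thesis using cE u(1) fV by (simp add: card_Diff_singleton)
  qed
  ultimately have "tree (VT - {u}) ?E'" unfolding tree_def by blast
  then show thesis using that u(1) \<open>u \<noteq> w\<close> pendant by blast
qed

definition connected_set :: "'a set set \<Rightarrow> 'a set \<Rightarrow> bool" where
  "connected_set E S \<longleftrightarrow> connected_graph S {e\<in>E. e \<subseteq> S}"

lemma connected_set_pendant_neighbour:
  assumes "connected_set E S" "u \<in> S" "S \<noteq> {u}" "\<forall>e\<in>E. u \<in> e \<longrightarrow> e = {u, w}"
  shows "w \<in> S"
proof -
  obtain z where z: "{u, z} \<in> E" "{u, z} \<subseteq> S"
    using connected_graph_neighbour[of S "{e\<in>E. e \<subseteq> S}" u] assms(1-3)
    unfolding connected_set_def by blast
  then have "{u, z} = {u, w}" using assms(4) by simp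
  then have "w \<in> {u, z}" by simp
  then show ?thesis using z(2) by blast
qed

lemma connected_set_delete_pendant:
  assumes "connected_set E S" "S \<noteq> {u}" "u \<noteq> w" "\<forall>e\<in>E. u \<in> e \<longrightarrow> e = {u, w}"
  shows "connected_set {e\<in>E. u \<notin> e} (S - {u})"
proof (cases "u \<in> S")
  case True
  have "\<forall>e\<in>{e\<in>E. e \<subseteq> S}. u \<in> e \<longrightarrow> e = {u, w}" using assms(4) by simp
  with assms(1-3) have "connected_graph (S - {u}) {e\<in>{e\<in>E. e \<subseteq> S}. u \<notin> e}"
    unfolding connected_set_def by (rule connected_graph_delete_pendant)
  moreover have "{e\<in>{e\<in>E. e \<subseteq> S}. u \<notin> e} = {e\<in>{e\<in>E. u \<notin> e}. e \<subseteq> S - {u}}" by blast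
  ultimately show ?thesis unfolding connected_set_def by simp
next
  case False
  then have "S - {u} = S" "{e\<in>E. e \<subseteq> S} = {e\<in>{e\<in>E. u \<notin> e}. e \<subseteq> S - {u}}" by blast+
  then show ?thesis using assms(1) unfolding connected_set_def by simp
qed

definition packing_or_transversal :: "'a set set \<Rightarrow> 'a set \<Rightarrow> nat \<Rightarrow> bool" where
  "packing_or_transversal F T l \<longleftrightarrow>
     (\<exists>P\<subseteq>F. finite P \<and> l < card P \<and> pairwise disjnt P) \<or>
     (\<exists>X\<subseteq>T. card X \<le> l \<and> (\<forall>S\<in>F. S \<inter> X \<noteq> {}))"

lemma packing_or_transversal_packingI:
  "P \<subseteq> F \<Longrightarrow> finite P \<Longrightarrow> l < card P \<Longrightarrow> pairwise disjnt P \<Longrightarrow> packing_or_transversal F T l"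
  unfolding packing_or_transversal_def by blast

lemma packing_or_transversal_transversalI:
  "X \<subseteq> T \<Longrightarrow> card X \<le> l \<Longrightarrow> (\<And>S. S \<in> F \<Longrightarrow> S \<inter> X \<noteq> {}) \<Longrightarrow> packing_or_transversal F T l"
  unfolding packing_or_transversal_def by blast

lemma packing_or_transversalE:
  assumes "packing_or_transversal F T l"
  obtains (packing) P where "P \<subseteq> F" "finite P" "l < card P" "pairwise disjnt P"
    | (transversal) X where "X \<subseteq> T" "card X \<le> l" "\<forall>S\<in>F. S \<inter> X \<noteq> {}"
  using assms unfolding packing_or_transversal_def by blast

lemma pairwise_disjnt_preimage:
  assumes "P \<subseteq> f ` F" "finite P" "pairwise disjnt P"
    and "\<And>A B. A \<in> F \<Longrightarrow> B \<in> F \<Longrightarrow> disjnt (f A) (f B) \<Longrightarrow> disjnt (g A) (g B)"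
  obtains U where "U \<subseteq> F" "finite U" "card U = card P" "pairwise (\<lambda>A B. disjnt (g A) (g B)) U"
proof -
  obtain U where U: "U \<subseteq> F" "inj_on f U" "P = f ` U"
    using assms(1) by (auto simp: subset_image_inj)
  have "pairwise (\<lambda>A B. disjnt (g A) (g B)) U"
  proof (rule pairwiseI)
    fix A B assume "A \<in> U" "B \<in> U" "A \<noteq> B"
    then have "f A \<noteq> f B" "f A \<in> P" "f B \<in> P" using U(2,3) by (auto dest: inj_onD)
    then have "disjnt (f A) (f B)" using assms(3) by (simp add: pairwise_def)
    then show "disjnt (g A) (g B)" using assms(4) U(1) \<open>A \<in> U\<close> \<open>B \<in> U\<close> by (simp add: subset_iff)
  qed
  moreover have "finite U" "card U = card P"
    using U assms(2) by (simp_all add: finite_image_iff card_image)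
  ultimately show thesis using that U(1) by blast
qed

lemma packing_or_transversal_single_point:
  assumes "\<forall>S\<in>F. S \<noteq> {} \<and> S \<subseteq> {t}" "t \<in> T"
  shows "packing_or_transversal F T l"
proof -
  have "F \<subseteq> {{t}}" using assms(1) by (auto simp: subset_singleton_iff)
  then consider "F = {}" | "F = {{t}}" "l = 0" | "0 < l"
    by (auto simp: subset_singleton_iff)
  then show ?thesis
  proof cases
    case 1
    then show ?thesis by (intro packing_or_transversal_transversalI[of "{}"]) auto
  next
    case 2
    then show ?thesis by (intro packing_or_transversal_packingI[of F]) auto
  next
    case 3
    then show ?thesis using assms by (intro packing_or_transversal_transversalI[of "{t}"]) auto
  qed
qed

lemma packing_or_transversal_remove_singleton:
  assumes "{u} \<in> F" "u \<in> T" "packing_or_transversal {S\<in>F. u \<notin> S} T' (l - 1)" "T' \<subseteq> T"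
  shows "packing_or_transversal F T l"
proof (cases "l = 0")
  case True
  then show ?thesis using assms(1) by (intro packing_or_transversal_packingI[of "{{u}}"]) auto
next
  case False
  from assms(3) show ?thesis
  proof (cases rule: packing_or_transversalE)
    case (packing P)
    then have "{u} \<notin> P" "pairwise disjnt (insert {u} P)"
      by (auto simp: pairwise_insert disjnt_def)
    then show ?thesis
      using packing assms(1) False by (intro packing_or_transversal_packingI[of "insert {u} P"]) auto
  next
    case (transversal X)
    have "card (insert u X) \<le> l" using transversal(2) False card_insert_le_m1[of l X u] by simp
    then show ?thesis
      using transversal assms(2,4) by (intro packing_or_transversal_transversalI[of "insert u X"]) auto
  qed
qed

lemma packing_or_transversal_delete_point:
  assumes "\<And>S. S \<in> F \<Longrightarrow> u \<in> S \<Longrightarrow> w \<in> S" "u \<noteq> w"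
    and "packing_or_transversal ((\<lambda>S. S - {u}) ` F) T' l" "T' \<subseteq> T"
  shows "packing_or_transversal F T l"
  using assms(3)
proof (cases rule: packing_or_transversalE)
  case (packing P)
  have "disjnt A B" if "A \<in> F" "B \<in> F" "disjnt (A - {u}) (B - {u})" for A B
    using that assms(1,2) unfolding disjnt_def by blast
  with packing obtain U where "U \<subseteq> F" "finite U" "card U = card P" "pairwise disjnt U"
    by (elim pairwise_disjnt_preimage[where g = "\<lambda>A. A"]) auto
  then show ?thesis using packing(3) by (intro packing_or_transversal_packingI[of U]) auto
next
  case (transversal X)
  then show ?thesis using assms(4) by (intro packing_or_transversal_transversalI[of X]) auto
qed

lemma subtrees_delete_leaf:
  assumes "\<forall>S\<in>F. S \<subseteq> VT \<and> connected_set ET S" "{u} \<notin> F"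
    and "u \<noteq> w" "\<forall>e\<in>ET. u \<in> e \<longrightarrow> e = {u, w}"
  shows "\<forall>S\<in>(\<lambda>S. S - {u}) ` F. S \<subseteq> VT - {u} \<and> connected_set {e\<in>ET. u \<notin> e} S"
proof
  fix S' assume "S' \<in> (\<lambda>S. S - {u}) ` F"
  then obtain S where S: "S \<in> F" "S' = S - {u}" by blast
  then have "S \<noteq> {u}" "connected_set ET S" using assms(1,2) by auto
  then have "connected_set {e\<in>ET. u \<notin> e} (S - {u})"
    using assms(3,4) by (intro connected_set_delete_pendant)
  then show "S' \<subseteq> VT - {u} \<and> connected_set {e\<in>ET. u \<notin> e} S'" using S assms(1) by blast
qed

text \<open>Induction on the tree: a leaf \<open>u\<close> either is itself a member of the family, and then joins the
  packing or the transversal, or it can be cut off every member without destroying connectivity or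
  disjointness, since every subtree through \<open>u\<close> also contains its neighbour \<open>w\<close>.\<close>
theorem subtrees_packing_or_transversal:
  assumes "tree VT ET" "\<forall>S\<in>F. S \<subseteq> VT \<and> connected_set ET S"
  shows "packing_or_transversal F VT l"
  using assms
proof (induction "card VT" arbitrary: VT ET F l rule: less_induct)
  case (less VT ET F l)
  have fV: "finite VT" and ne: "VT \<noteq> {}"
    using tree_finite_nonempty[OF less.prems(1)] .
  show ?case
  proof (cases "2 \<le> card VT")
    case False
    then have "card VT = 1" using fV ne by (simp add: Suc_leI card_gt_0_iff le_antisym)
    then obtain t where "VT = {t}" by (rule card_1_singletonE)
    moreover have "\<forall>S\<in>F. S \<noteq> {}"
      using less.prems(2) unfolding connected_set_def connected_graph_def by blast
    ultimately show ?thesis using less.prems(2) by (intro packing_or_transversal_single_point) auto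
  next
    case True
    then obtain u w where u: "u \<in> VT" "u \<noteq> w" and pendant: "\<forall>e\<in>ET. u \<in> e \<longrightarrow> e = {u, w}"
      and tree': "tree (VT - {u}) {e\<in>ET. u \<notin> e}"
      using tree_delete_leaf[OF less.prems(1)] by blast
    have smaller: "card (VT - {u}) < card VT" using fV u(1) by (rule card_Diff1_less)
    show ?thesis
    proof (cases "{u} \<in> F")
      case True
      let ?F' = "{S\<in>F. u \<notin> S}"
      have "(\<lambda>S. S - {u}) ` ?F' = ?F'" by auto
      moreover have "\<forall>S\<in>(\<lambda>S. S - {u}) ` ?F'. S \<subseteq> VT - {u} \<and> connected_set {e\<in>ET. u \<notin> e} S"
        using less.prems(2) u(2) pendant by (intro subtrees_delete_leaf) auto
      ultimately have "packing_or_transversal ?F' (VT - {u}) (l - 1)"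
        using less.hyps[OF smaller tree'] by simp
      then show ?thesis by (rule packing_or_transversal_remove_singleton[OF True u(1)]) blast
    next
      case False
      have neighbour: "w \<in> S" if "S \<in> F" "u \<in> S" for S
      proof (rule connected_set_pendant_neighbour[OF _ that(2) _ pendant])
        show "connected_set ET S" using that(1) less.prems(2) by blast
        show "S \<noteq> {u}" using that(1) False by blast
      qed
      have "packing_or_transversal ((\<lambda>S. S - {u}) ` F) (VT - {u}) l"
        using less.prems(2) False u(2) pendant
        by (intro less.hyps[OF smaller tree'] subtrees_delete_leaf)
      from neighbour u(2) this show ?thesis by (rule packing_or_transversal_delete_point) auto
    qed
  qed
qed

lemma tree_decomposition_tree: "tree_decomposition V E VT ET B \<Longrightarrow> tree VT ET"
  unfolding tree_decomposition_def by blast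

lemma tree_decomposition_bag_subset: "tree_decomposition V E VT ET B \<Longrightarrow> t \<in> VT \<Longrightarrow> B t \<subseteq> V"
  unfolding tree_decomposition_def by blast

lemma tree_decomposition_covers_vertex:
  "tree_decomposition V E VT ET B \<Longrightarrow> v \<in> V \<Longrightarrow> \<exists>t\<in>VT. v \<in> B t"
  unfolding tree_decomposition_def by blast

lemma tree_decomposition_covers_edge:
  "tree_decomposition V E VT ET B \<Longrightarrow> e \<in> E \<Longrightarrow> \<exists>t\<in>VT. e \<subseteq> B t"
  unfolding tree_decomposition_def by blast

lemma tree_decomposition_vertex_bags_connected:
  "tree_decomposition V E VT ET B \<Longrightarrow> v \<in> V \<Longrightarrow> connected_set ET {t\<in>VT. v \<in> B t}"
  unfolding tree_decomposition_def connected_set_def by blast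

lemma connected_set_path_within:
  assumes "connected_set E S" "S \<subseteq> T" "x \<in> S" "y \<in> S"
  shows "(x, y) \<in> {(a, b). {a, b} \<in> {e\<in>E. e \<subseteq> T}}\<^sup>*"
proof -
  have "(x, y) \<in> {(a, b). {a, b} \<in> {e\<in>E. e \<subseteq> S}}\<^sup>*"
    using assms(1,3,4) unfolding connected_set_def connected_graph_def by blast
  moreover have "{(a, b). {a, b} \<in> {e\<in>E. e \<subseteq> S}} \<subseteq> {(a, b). {a, b} \<in> {e\<in>E. e \<subseteq> T}}"
    using assms(2) by auto
  ultimately show ?thesis using rtrancl_mono by blast
qed

text \<open>The bags containing one vertex form a subtree, and the subtrees of the two ends of an edge
  share the bag covering that edge; following a path in the subgraph chains these subtrees together.\<close>
lemma tree_decomposition_bags_meeting_connected: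
  assumes td: "tree_decomposition V E VT ET B"
    and "subgraph VH EH V E" "connected_graph VH EH"
  shows "connected_set ET {t\<in>VT. B t \<inter> VH \<noteq> {}}"
proof -
  let ?T = "{t\<in>VT. B t \<inter> VH \<noteq> {}}"
  let ?RT = "{(x, y). {x, y} \<in> {e\<in>ET. e \<subseteq> ?T}}"
  have gH: "graph VH EH" and "VH \<subseteq> V" "EH \<subseteq> E" using assms(2) unfolding subgraph_def by auto
  have same_vertex: "(t, t') \<in> ?RT\<^sup>*"
    if "v \<in> VH" "t \<in> VT" "v \<in> B t" "t' \<in> VT" "v \<in> B t'" for v t t'
  proof (rule connected_set_path_within)
    show "connected_set ET {t\<in>VT. v \<in> B t}"
      using that(1) \<open>VH \<subseteq> V\<close> by (intro tree_decomposition_vertex_bags_connected[OF td]) blast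
    show "{t\<in>VT. v \<in> B t} \<subseteq> ?T" using that(1) by blast
  qed (use that in auto)
  have along_path: "\<forall>t\<in>VT. \<forall>t'\<in>VT. v \<in> B t \<longrightarrow> v' \<in> B t' \<longrightarrow> (t, t') \<in> ?RT\<^sup>*"
    if "v \<in> VH" "(v, v') \<in> {(x, y). {x, y} \<in> EH}\<^sup>*" for v v'
    using that(2)
  proof (induction rule: rtrancl_induct)
    case base
    then show ?case using same_vertex[OF that(1)] by blast
  next
    case (step y z)
    have yz: "{y, z} \<in> EH" using step.hyps(2) by simp
    then have "z \<in> VH" using graph_edgeD[OF gH] by blast
    obtain t0 where t0: "t0 \<in> VT" "{y, z} \<subseteq> B t0"
      using tree_decomposition_covers_edge[OF td] yz \<open>EH \<subseteq> E\<close> by blast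
    show ?case
    proof (intro ballI impI)
      fix t t' assume "t \<in> VT" "t' \<in> VT" "v \<in> B t" "z \<in> B t'"
      then have "(t, t0) \<in> ?RT\<^sup>*" "(t0, t') \<in> ?RT\<^sup>*"
        using step.IH t0 same_vertex[OF \<open>z \<in> VH\<close> t0(1)] by auto
      then show "(t, t') \<in> ?RT\<^sup>*" by (rule rtrancl_trans)
    qed
  qed
  show ?thesis
    unfolding connected_set_def connected_graph_def
  proof (intro conjI ballI)
    obtain v where "v \<in> VH" using assms(3) unfolding connected_graph_def by blast
    then obtain t where "t \<in> VT" "v \<in> B t"
      using tree_decomposition_covers_vertex[OF td] \<open>VH \<subseteq> V\<close> by blast
    then show "?T \<noteq> {}" using \<open>v \<in> VH\<close> by blast
  next
    fix x y assume "x \<in> ?T" "y \<in> ?T"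
    then obtain v v' where "v \<in> VH" "v \<in> B x" "x \<in> VT" "v' \<in> VH" "v' \<in> B y" "y \<in> VT" by blast
    moreover have "(v, v') \<in> {(x, y). {x, y} \<in> EH}\<^sup>*"
      using assms(3) \<open>v \<in> VH\<close> \<open>v' \<in> VH\<close> unfolding connected_graph_def by blast
    ultimately show "(x, y) \<in> ?RT\<^sup>*" using along_path by blast
  qed
qed

lemma tree_decomposition_bags_meeting_disjnt:
  assumes td: "tree_decomposition V E VT ET B"
    and "A \<subseteq> V" "disjnt {t\<in>VT. B t \<inter> A \<noteq> {}} {t\<in>VT. B t \<inter> A' \<noteq> {}}"
  shows "disjnt A A'"
  unfolding disjnt_iff
proof (intro allI notI, elim conjE)
  fix v assume "v \<in> A" "v \<in> A'"
  moreover obtain t where "t \<in> VT" "v \<in> B t"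
    using tree_decomposition_covers_vertex[OF td] \<open>v \<in> A\<close> assms(2) by blast
  ultimately have "t \<in> {t\<in>VT. B t \<inter> A \<noteq> {}} \<inter> {t\<in>VT. B t \<inter> A' \<noteq> {}}" by blast
  then show False using assms(3) unfolding disjnt_def by blast
qed

lemma tree_decomposition_trivial:
  assumes "graph V E"
  shows "tree_decomposition V E {0} {} (\<lambda>_. V)"
proof -
  have "tree {0::nat} {}" unfolding tree_def graph_def connected_graph_def by simp
  moreover have "\<forall>e\<in>E. e \<subseteq> V" using graph_edge_subset[OF assms] by blast
  ultimately show ?thesis unfolding tree_decomposition_def connected_graph_def by auto
qed

lemma decomposition_width_ge: "-1 \<le> decomposition_width VT B"
  unfolding decomposition_width_def by simp

lemma card_bag_le_width:
  assumes "tree_decomposition V E VT ET B" "t \<in> VT"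
  shows "int (card (B t)) \<le> decomposition_width VT B + 1"
proof -
  have "finite VT" using tree_finite_nonempty(1)[OF tree_decomposition_tree[OF assms(1)]] .
  then show ?thesis using assms(2) unfolding decomposition_width_def by simp
qed

lemma treewidth_attained:
  assumes "graph V E"
  obtains VT ET B where "tree_decomposition V E VT ET B" "treewidth V E = decomposition_width VT B"
proof -
  let ?W = "{w. \<exists>VT ET B. tree_decomposition V E VT ET B \<and> w = decomposition_width VT B}"
  have "?W \<noteq> {}" using tree_decomposition_trivial[OF assms] by blast
  moreover have "?W \<subseteq> {-1 .. int (card V)}"
  proof
    fix w assume "w \<in> ?W"
    then obtain VT ET B where td: "tree_decomposition V E VT ET B" and w: "w = decomposition_width VT B"
      by blast
    have "finite VT" "VT \<noteq> {}" using tree_finite_nonempty[OF tree_decomposition_tree[OF td]] .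
    then have "Max ((\<lambda>t. card (B t)) ` VT) \<in> (\<lambda>t. card (B t)) ` VT" by (intro Max_in) auto
    then obtain t where "t \<in> VT" "w = int (card (B t)) - 1"
      using w unfolding decomposition_width_def by auto
    moreover have "card (B t) \<le> card V"
    proof (rule card_mono)
      show "finite V" using assms unfolding graph_def by simp
      show "B t \<subseteq> V" using tree_decomposition_bag_subset[OF td \<open>t \<in> VT\<close>] .
    qed
    ultimately show "w \<in> {-1 .. int (card V)}" by simp
  qed
  then have "finite ?W" by (rule finite_subset) simp
  ultimately have "treewidth V E \<in> ?W" unfolding treewidth_def by (rule Min_in[rotated])
  then show thesis using that by blast
qed

lemma card_Union_bags_le:
  assumes "tree_decomposition V E VT ET B" "X \<subseteq> VT" "card X \<le> n"
  shows "real (card (\<Union>t\<in>X. B t)) \<le> real_of_int (decomposition_width VT B + 1) * real n"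
proof -
  have "finite X"
    using tree_finite_nonempty(1)[OF tree_decomposition_tree[OF assms(1)]] assms(2)
    by (rule finite_subset[rotated])
  then have "real (card (\<Union>t\<in>X. B t)) \<le> (\<Sum>t\<in>X. real (card (B t)))"
    using card_UN_le[of X B] by (simp flip: of_nat_sum)
  also have "\<dots> \<le> real (card X) * real_of_int (decomposition_width VT B + 1)"
  proof (rule sum_bounded_above)
    fix t assume "t \<in> X"
    then have "int (card (B t)) \<le> decomposition_width VT B + 1"
      using assms(2) by (intro card_bag_le_width[OF assms(1)]) blast
    then show "real (card (B t)) \<le> real_of_int (decomposition_width VT B + 1)"
      by (metis of_int_le_iff of_int_of_nat_eq)
  qed
  also have "\<dots> \<le> real n * real_of_int (decomposition_width VT B + 1)"
    using assms(3) decomposition_width_ge[of VT B] by (intro mult_right_mono) auto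
  finally show ?thesis by (simp add: mult.commute)
qed

lemma le_mult_log2_Suc: "real l \<le> real l * log 2 (real l + 1)"
proof (cases "l = 0")
  case False
  then have "1 \<le> log 2 (real l + 1)" by simp
  then show ?thesis using mult_left_mono[of 1 _ "real l"] by simp
qed simp

theorem lemma5p2:
  fixes V :: "'a set" and E :: "'a set set"
    and \<H> :: "('a set \<times> 'a set set) set" and l :: nat
  assumes "graph V E"
    and "\<forall>h\<in>\<H>. subgraph (fst h) (snd h) V E \<and> connected_graph (fst h) (snd h)"
  shows "(\<exists>S\<subseteq>\<H>. finite S \<and> card S > l \<and>
            (\<forall>h1\<in>S. \<forall>h2\<in>S. h1 \<noteq> h2 \<longrightarrow> fst h1 \<inter> fst h2 = {}))
       \<or> (\<exists>Q\<subseteq>V. real (card Q) \<le> real_of_int (treewidth V E + 1) * real l * log 2 (real l + 1)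
                 \<and> (\<forall>h\<in>\<H>. fst h \<inter> Q \<noteq> {}))"
proof -
  obtain VT ET B where td: "tree_decomposition V E VT ET B"
    and tw: "treewidth V E = decomposition_width VT B"
    using treewidth_attained[OF assms(1)] .
  define bags where "bags h = {t\<in>VT. B t \<inter> fst h \<noteq> {}}" for h :: "'a set \<times> 'a set set"
  have "\<forall>S\<in>bags ` \<H>. S \<subseteq> VT \<and> connected_set ET S"
  proof
    fix S assume "S \<in> bags ` \<H>"
    then obtain h where "h \<in> \<H>" "S = bags h" by blast
    moreover have "connected_set ET (bags h)"
      unfolding bags_def using assms(2) \<open>h \<in> \<H>\<close>
      by (intro tree_decomposition_bags_meeting_connected[OF td]) blast+
    ultimately show "S \<subseteq> VT \<and> connected_set ET S" unfolding bags_def by blast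
  qed
  with tree_decomposition_tree[OF td] have "packing_or_transversal (bags ` \<H>) VT l"
    by (rule subtrees_packing_or_transversal)
  then show ?thesis
  proof (cases rule: packing_or_transversalE)
    case (packing P)
    have "disjnt (fst h1) (fst h2)"
      if "h1 \<in> \<H>" "h2 \<in> \<H>" "disjnt (bags h1) (bags h2)" for h1 h2
      using that assms(2) unfolding bags_def subgraph_def
      by (intro tree_decomposition_bags_meeting_disjnt[OF td]) blast+
    then obtain U where "U \<subseteq> \<H>" "finite U" "card U = card P"
      "pairwise (\<lambda>h1 h2. disjnt (fst h1) (fst h2)) U"
      by (rule pairwise_disjnt_preimage[where g = fst, OF packing(1,2,4)])
    then show ?thesis
      using packing(3) unfolding pairwise_def disjnt_def by (intro disjI1 exI[of _ U]) simp
  next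
    case (transversal X)
    let ?Q = "\<Union>t\<in>X. B t"
    have "real (card ?Q) \<le> real_of_int (treewidth V E + 1) * real l"
      using card_Union_bags_le[OF td transversal(1,2)] tw by simp
    also have "\<dots> \<le> real_of_int (treewidth V E + 1) * real l * log 2 (real l + 1)"
      using mult_left_mono[OF le_mult_log2_Suc[of l]] decomposition_width_ge[of VT B] tw
      by (simp add: mult.assoc)
    finally have "real (card ?Q) \<le> real_of_int (treewidth V E + 1) * real l * log 2 (real l + 1)" .
    moreover have "?Q \<subseteq> V"
      using tree_decomposition_bag_subset[OF td] transversal(1) by blast
    moreover have "\<forall>h\<in>\<H>. fst h \<inter> ?Q \<noteq> {}"
    proof
      fix h assume "h \<in> \<H>"
      then have "bags h \<inter> X \<noteq> {}" using transversal(3) by simp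
      then obtain t where "t \<in> X" "B t \<inter> fst h \<noteq> {}" unfolding bags_def by blast
      then show "fst h \<inter> ?Q \<noteq> {}" by blast
    qed
    ultimately show ?thesis by (intro disjI2 exI[of _ ?Q]) simp
  qed
qed

end
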